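(* Let $\mathcal{G}=(\mathcal{V},\mathcal{E})$ be a strongly connected digraph with $n$ nodes $v_1,\dots,v_n$, where node $v_j$ has out-degree $d_j^+$ and arbitrary initial value $x_j[0]\in\mathbb{R}$, and $y_j[0]=1$. Consider the ARQ-based Ratio Consensus iteration written in augmented form $$\tilde{x}[k+1]=\Xi[k]\,\tilde{x}[k],\qquad \tilde{y}[k+1]=\Xi[k]\,\tilde{y}[k],\qquad k=0,1,2,\dots,$$ where $\tilde x[k],\tilde y[k]\in\mathbb{R}^{\tilde n}$, $\tilde n\ge n$, the first $n$ coordinates correspond to the actual nodes and are initialized as $\tilde x_j[0]=x_j[0]$, $\tilde y_j[0]=1$ for $j=1,\dots,n$, while all remaining (virtual-node) coordinates are initialized to $0$. Assume the random matrices $\Xi[k]$ satisfy the standing assumptions (A1)–(A3) below. For each actual node $v_j$ let $\mathcal{K}_j=\{k\ge 0:\ \tilde y_j[k]\ge c^{\lambda}\}$ and, for $k\in\mathcal{K}_j$, let $z_j[k]=\tilde x_j[k]/\tilde y_j[k]$. Then, with probability $1$, for every $v_j\in\mathcal{V}$ the set $\mathcal{K}_j$ is infinite and $$\lim_{k\to\infty,\ k\in\mathcal{K}_j} z_j[k]=\frac{1}{n}\sum_{i=1}^{n}x_i[0].$$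
   Context: Model: the augmented digraph adds, for each edge $(v_j,v_i)\in\mathcal{E}$ (meaning $v_j$ receives from $v_i$), $\bar\tau$ virtual "delay" nodes (holding information that will arrive at $v_j$ after $r=1,\dots,\bar\tau$ steps, where $\bar\tau$ is the ARQ retransmission limit and upper bound on delays) and one virtual "buffer" node (holding mass lost due to packet drops, released later), so $\tilde n=|\mathcal{E}|(\bar\tau+1)+n$. The weights used by node $v_j$ on its out-going links and self-loop are $p_{lj}=1/(1+d_j^+)$ for $v_l\in\mathcal{N}_j^+\cup\{v_j\}$ and $0$ otherwise. Standing assumptions on the random matrices $\Xi[k]\in\mathbb{R}_+^{\tilde n\times\tilde n}$, which encode the realized retransmission delays and packet drops at step $k$: (A1) Each $\Xi[k]$ takes values in a fixed finite set $\mathcal{X}$ of nonnegative column-stochastic $\tilde n\times\tilde n$ matrices, every entry of which is $0$, $1$, or $1/(1+d_j^+)$ for some $j$; hence every positive entry is at least $c:=\min_{j}1/(1+d_j^+)$. (A2) There exist a positive integer $\lambda$, matrices $\Xi_1,\dots,\Xi_\lambda\in\mathcal{X}$ and a constant $p_{\min}>0$ such that the product $L=\Xi_\lambda\Xi_{\lambda-1}\cdots\Xi_1$ satisfies $L(j,i)>0$ for every $j\in\{1,\dots,n\}$ and every $i\in\{1,\dots,\tilde n\}$ (all entries in the rows of the actual nodes are strictly positive). (A3) For every $k\ge 0$, conditionally on the past realizations $\Xi[0],\dots,\Xi[k]$, the event $\{\Xi[k+1]=\Xi_1,\ \Xi[k+2]=\Xi_2,\dots,\Xi[k+\lambda]=\Xi_\lambda\}$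 has probability at least $p_{\min}$. *)

theory Defs
  imports "HOL-Probability.Probability"
begin

text \<open>Matrices of size N x N are represented as functions nat => nat => real
  whose entries vanish outside the index range {0..<N}.\<close>

type_synonym rmat = "nat \<Rightarrow> nat \<Rightarrow> real"

definition supported_mat :: "nat \<Rightarrow> rmat \<Rightarrow> bool" where
  "supported_mat N A \<longleftrightarrow> (\<forall>l i. (l \<ge> N \<or> i \<ge> N) \<longrightarrow> A l i = 0)"

definition nonneg_col_stochastic :: "nat \<Rightarrow> rmat \<Rightarrow> bool" where
  "nonneg_col_stochastic N A \<longleftrightarrow> supported_mat N A \<and>
     (\<forall>l<N. \<forall>i<N. 0 \<le> A l i) \<and> (\<forall>i<N. (\<Sum>l<N. A l i) = 1)"

definition mat_mult :: "nat \<Rightarrow> rmat \<Rightarrow> rmat \<Rightarrow> rmat" where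
  "mat_mult N A B = (\<lambda>l i. if l < N \<and> i < N then (\<Sum>m<N. A l m * B m i) else 0)"

definition mat_id :: "nat \<Rightarrow> rmat" where
  "mat_id N = (\<lambda>l i. if l < N \<and> i < N \<and> l = i then 1 else 0)"

fun mat_prod :: "nat \<Rightarrow> (nat \<Rightarrow> rmat) \<Rightarrow> nat \<Rightarrow> rmat" where
  "mat_prod N Xs 0 = mat_id N"
| "mat_prod N Xs (Suc m) = mat_mult N (Xs (Suc m)) (mat_prod N Xs m)"

text \<open>Out-degree of node j: number of out-neighbours l, i.e. edges (v_l, v_j)
  (v_l receives from v_j).\<close>
definition out_deg :: "(nat \<times> nat) set \<Rightarrow> nat \<Rightarrow> nat" where
  "out_deg E j = card {l. (l, j) \<in> E}"

definition strongly_connected :: "nat \<Rightarrow> (nat \<times> nat) set \<Rightarrow> bool" where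
  "strongly_connected n E \<longleftrightarrow> E \<subseteq> {0..<n} \<times> {0..<n} \<and> (\<forall>i. (i, i) \<notin> E) \<and>
     (\<forall>i<n. \<forall>j<n. (i, j) \<in> E\<^sup>*)"

fun aug_iter :: "nat \<Rightarrow> (nat \<Rightarrow> 'a \<Rightarrow> rmat) \<Rightarrow> (nat \<Rightarrow> real) \<Rightarrow> nat \<Rightarrow> 'a \<Rightarrow> nat \<Rightarrow> real" where
  "aug_iter N Xi v0 0 \<omega> = (\<lambda>l. if l < N then v0 l else 0)"
| "aug_iter N Xi v0 (Suc k) \<omega> = (\<lambda>l. if l < N then (\<Sum>i<N. Xi k \<omega> l i * aug_iter N Xi v0 k \<omega> i) else 0)"

end

theory Submission
  imports Defs
begin

text \<open>
  Column-stochastic matrices preserve the mass \<open>\<Sum>\<^sub>l v\<^sub>l\<close> of a vector and do not increase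
  its \<open>\<ell>\<^sub>1\<close>-norm. Hence \<open>w = x - a y\<close> with \<open>a = (\<Sum>\<^sub>i x\<^sub>i[0]) / n\<close> keeps mass zero under the
  iteration. Each occurrence of the block \<open>\<Xi>\<^sub>1, \<dots>, \<Xi>\<^sub>\<lambda>\<close> of (A2) applies the product \<open>L\<close>, whose
  row \<open>j\<close> is bounded below by \<open>c\<^sup>\<lambda>\<close>; such a matrix shrinks the \<open>\<ell>\<^sub>1\<close>-norm of mass-zero vectors by
  the factor \<open>1 - c\<^sup>\<lambda>\<close>, and it pushes \<open>y\<^sub>j\<close> up to at least \<open>c\<^sup>\<lambda> n\<close>. By (A3) the block is missed
  in \<open>m\<close> consecutive disjoint windows with probability at most \<open>(1 - p\<^sub>m\<^sub>i\<^sub>n)\<^sup>m\<close>, so almost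
  surely it recurs infinitely often. Then \<open>w \<longrightarrow> 0\<close>, \<open>y\<^sub>j \<ge> c\<^sup>\<lambda>\<close> infinitely often, and along those
  times \<open>x\<^sub>j / y\<^sub>j - a = w\<^sub>j / y\<^sub>j \<longrightarrow> 0\<close>.
\<close>

lemma INFM_nat_shift:
  assumes "\<exists>\<^sub>\<infinity>k. P k" and "\<And>k. P k \<Longrightarrow> Q (k + d)"
  shows "\<exists>\<^sub>\<infinity>k::nat. Q k"
  using assms unfolding INFM_nat_le by (meson le_add1 order_trans)

lemma decseq_frequently_contracting_tendsto_0:
  fixes a :: "nat \<Rightarrow> real"
  assumes dec: "decseq a" and nonneg: "\<And>k. 0 \<le> a k" and q: "0 \<le> q" "q < 1"
    and contract: "\<exists>\<^sub>\<infinity>k. \<exists>k'. a k' \<le> q * a k"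
  shows "a \<longlonglongrightarrow> 0"
proof -
  have geometric: "\<exists>T. \<forall>k\<ge>T. a k \<le> q ^ m * a 0" for m
  proof (induction m)
    case 0
    show ?case using dec by (auto simp: decseq_def)
  next
    case (Suc m)
    then obtain T where T: "\<forall>k\<ge>T. a k \<le> q ^ m * a 0" by blast
    obtain k k' where k: "k \<ge> T" and k': "a k' \<le> q * a k"
      using contract unfolding INFM_nat_le by blast
    note k'
    also have "q * a k \<le> q * (q ^ m * a 0)"
      using T k q by (intro mult_left_mono) auto
    finally have "a k' \<le> q ^ Suc m * a 0" by (simp add: mult.assoc)
    then show ?case using dec by (metis decseq_def order.trans)
  qed
  obtain L where L: "a \<longlonglongrightarrow> L" "\<forall>k. L \<le> a k"
    using decseq_convergent[OF dec, of 0] nonneg by blast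
  have "L \<le> 0"
  proof (rule LIMSEQ_le_const)
    show "(\<lambda>m. q ^ m * a 0) \<longlonglongrightarrow> 0"
      using q by (intro tendsto_mult_left_zero LIMSEQ_power_zero) auto
    show "\<exists>M. \<forall>m\<ge>M. L \<le> q ^ m * a 0"
      using geometric L(2) by (meson order.trans order_refl)
  qed
  moreover have "0 \<le> L"
    using L(1) nonneg by (intro LIMSEQ_le_const[OF L(1)]) auto
  ultimately show ?thesis using L(1) by simp
qed

section \<open>Iterating column-stochastic matrices\<close>

definition mat_vec :: "nat \<Rightarrow> rmat \<Rightarrow> (nat \<Rightarrow> real) \<Rightarrow> nat \<Rightarrow> real" where
  "mat_vec N A v = (\<lambda>l. if l < N then (\<Sum>i<N. A l i * v i) else 0)"

fun vec_iter :: "nat \<Rightarrow> (nat \<Rightarrow> rmat) \<Rightarrow> (nat \<Rightarrow> real) \<Rightarrow> nat \<Rightarrow> nat \<Rightarrow> real" where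
  "vec_iter N B v 0 = v"
| "vec_iter N B v (Suc k) = mat_vec N (B k) (vec_iter N B v k)"

definition supported_vec :: "nat \<Rightarrow> (nat \<Rightarrow> real) \<Rightarrow> bool" where
  "supported_vec N v \<longleftrightarrow> (\<forall>l\<ge>N. v l = 0)"

definition vec_sum :: "nat \<Rightarrow> (nat \<Rightarrow> real) \<Rightarrow> real" where
  "vec_sum N v = (\<Sum>l<N. v l)"

definition vec_norm1 :: "nat \<Rightarrow> (nat \<Rightarrow> real) \<Rightarrow> real" where
  "vec_norm1 N v = (\<Sum>l<N. \<bar>v l\<bar>)"

lemma aug_iter_eq_vec_iter:
  "aug_iter N Xi v0 k \<omega> = vec_iter N (\<lambda>k. Xi k \<omega>) (\<lambda>l. if l < N then v0 l else 0) k"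
  by (induction k) (simp_all add: mat_vec_def cong: if_cong)

lemma vec_iter_add:
  "vec_iter N B v (a + m) = vec_iter N (\<lambda>r. B (a + r)) (vec_iter N B v a) m"
  by (induction m) simp_all

lemma vec_iter_cong: "(\<And>r. r < m \<Longrightarrow> B r = B' r) \<Longrightarrow> vec_iter N B v m = vec_iter N B' v m"
  by (induction m) auto

lemma vec_iter_diff:
  "vec_iter N B (\<lambda>l. a l - t * b l) k = (\<lambda>l. vec_iter N B a k l - t * vec_iter N B b k l)"
  by (induction k)
    (simp_all add: mat_vec_def fun_eq_iff sum_subtractf sum_distrib_left right_diff_distrib
      mult.left_commute)

lemma supported_vec_mat_vec: "supported_vec N (mat_vec N A v)"
  by (simp add: supported_vec_def mat_vec_def)

lemma mat_vec_mat_mult: "mat_vec N (mat_mult N A B) v = mat_vec N A (mat_vec N B v)"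
proof (rule ext)
  fix l
  show "mat_vec N (mat_mult N A B) v l = mat_vec N A (mat_vec N B v) l"
  proof (cases "l < N")
    case True
    have "mat_vec N (mat_mult N A B) v l = (\<Sum>i<N. \<Sum>m<N. A l m * B m i * v i)"
      using True by (simp add: mat_vec_def mat_mult_def sum_distrib_right)
    also have "\<dots> = (\<Sum>m<N. A l m * (\<Sum>i<N. B m i * v i))"
      by (subst sum.swap) (simp add: sum_distrib_left mult.assoc)
    also have "\<dots> = mat_vec N A (mat_vec N B v) l"
      using True by (simp add: mat_vec_def)
    finally show ?thesis .
  qed (simp add: mat_vec_def)
qed

lemma mat_vec_mat_id: "supported_vec N v \<Longrightarrow> mat_vec N (mat_id N) v = v"
proof (rule ext)
  fix l assume v: "supported_vec N v"
  have "(\<Sum>i<N. mat_id N l i * v i) = (if l < N then v l else 0)"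
    by (simp add: mat_id_def if_distrib[of "\<lambda>a. a * v _"] cong: if_cong)
  then show "mat_vec N (mat_id N) v l = v l"
    using v by (simp add: mat_vec_def supported_vec_def)
qed

lemma vec_iter_eq_mat_prod:
  "supported_vec N v \<Longrightarrow> vec_iter N (\<lambda>r. Xs (Suc r)) v m = mat_vec N (mat_prod N Xs m) v"
  by (induction m) (simp_all add: mat_vec_mat_id mat_vec_mat_mult)

lemma nonneg_col_stochastic_nonneg: "nonneg_col_stochastic N A \<Longrightarrow> 0 \<le> A l i"
  unfolding nonneg_col_stochastic_def supported_mat_def by (metis linorder_not_le order_refl)

lemma nonneg_col_stochastic_col_sum:
  "nonneg_col_stochastic N A \<Longrightarrow> i < N \<Longrightarrow> (\<Sum>l<N. A l i) = 1"
  unfolding nonneg_col_stochastic_def by blast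

lemma vec_sum_mat_vec:
  assumes "nonneg_col_stochastic N A" shows "vec_sum N (mat_vec N A v) = vec_sum N v"
proof -
  have "vec_sum N (mat_vec N A v) = (\<Sum>l<N. \<Sum>i<N. A l i * v i)"
    by (simp add: vec_sum_def mat_vec_def)
  also have "\<dots> = (\<Sum>i<N. v i * (\<Sum>l<N. A l i))"
    by (subst sum.swap) (simp add: sum_distrib_left mult.commute)
  also have "\<dots> = vec_sum N v"
    using nonneg_col_stochastic_col_sum[OF assms] by (simp add: vec_sum_def)
  finally show ?thesis .
qed

lemma vec_norm1_mat_vec_le:
  assumes "nonneg_col_stochastic N A" shows "vec_norm1 N (mat_vec N A v) \<le> vec_norm1 N v"
proof -
  have "vec_norm1 N (mat_vec N A v) \<le> (\<Sum>l<N. \<Sum>i<N. A l i * \<bar>v i\<bar>)"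
    unfolding vec_norm1_def mat_vec_def
    by (auto intro!: sum_mono order.trans[OF sum_abs]
        simp: abs_mult nonneg_col_stochastic_nonneg[OF assms])
  also have "\<dots> = (\<Sum>i<N. \<bar>v i\<bar> * (\<Sum>l<N. A l i))"
    by (subst sum.swap) (simp add: sum_distrib_left mult.commute)
  also have "\<dots> = vec_norm1 N v"
    using nonneg_col_stochastic_col_sum[OF assms] by (simp add: vec_norm1_def)
  finally show ?thesis .
qed

text \<open>Subtracting \<open>g\<close> from row \<open>j\<close> does not change \<open>A v\<close>, as \<open>v\<close> has mass zero, and leaves
  nonnegative columns of mass \<open>1 - g\<close>.\<close>
lemma vec_norm1_mat_vec_contract:
  assumes A: "nonneg_col_stochastic N A" and j: "j < N" and g: "\<forall>i<N. g \<le> A j i"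
    and v: "vec_sum N v = 0"
  shows "vec_norm1 N (mat_vec N A v) \<le> (1 - g) * vec_norm1 N v"
proof -
  define A' where "A' l i = A l i - (if l = j then g else 0)" for l i
  have A'_nonneg: "0 \<le> A' l i" if "i < N" for l i
    using g that nonneg_col_stochastic_nonneg[OF A] by (simp add: A'_def)
  have "(\<Sum>i<N. A l i * v i) = (\<Sum>i<N. A' l i * v i)" for l
    using v by (simp add: A'_def algebra_simps sum.distrib sum_subtractf vec_sum_def
        flip: sum_distrib_left)
  then have "vec_norm1 N (mat_vec N A v) \<le> (\<Sum>l<N. \<Sum>i<N. A' l i * \<bar>v i\<bar>)"
    unfolding vec_norm1_def mat_vec_def
    by (auto intro!: sum_mono order.trans[OF sum_abs] simp: abs_mult A'_nonneg)
  also have "\<dots> = (\<Sum>i<N. \<bar>v i\<bar> * (\<Sum>l<N. A' l i))"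
    by (subst sum.swap) (simp add: sum_distrib_left mult.commute)
  also have "\<dots> = (\<Sum>i<N. \<bar>v i\<bar> * (1 - g))"
    using j nonneg_col_stochastic_col_sum[OF A] by (simp add: A'_def sum_subtractf)
  also have "\<dots> = (1 - g) * vec_norm1 N v"
    by (simp add: vec_norm1_def sum_distrib_left mult.commute)
  finally show ?thesis .
qed

lemma mat_vec_nonneg:
  "nonneg_col_stochastic N A \<Longrightarrow> (\<And>i. 0 \<le> v i) \<Longrightarrow> 0 \<le> mat_vec N A v l"
  unfolding mat_vec_def by (auto intro!: sum_nonneg simp: nonneg_col_stochastic_nonneg)

lemma nonneg_col_stochastic_mat_mult:
  assumes A: "nonneg_col_stochastic N A" and B: "nonneg_col_stochastic N B"
  shows "nonneg_col_stochastic N (mat_mult N A B)"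
proof -
  have "(\<Sum>l<N. mat_mult N A B l i) = 1" if i: "i < N" for i
  proof -
    have "(\<Sum>l<N. mat_mult N A B l i) = (\<Sum>m<N. B m i * (\<Sum>l<N. A l m))"
      using i by (simp add: mat_mult_def, subst sum.swap) (simp add: sum_distrib_left mult.commute)
    also have "\<dots> = 1"
      using nonneg_col_stochastic_col_sum[OF A] nonneg_col_stochastic_col_sum[OF B i] by simp
    finally show ?thesis .
  qed
  then show ?thesis
    by (auto simp: nonneg_col_stochastic_def supported_mat_def mat_mult_def
        intro!: sum_nonneg
        simp: nonneg_col_stochastic_nonneg[OF A] nonneg_col_stochastic_nonneg[OF B])
qed

lemma nonneg_col_stochastic_mat_id: "nonneg_col_stochastic N (mat_id N)"
  by (auto simp: nonneg_col_stochastic_def supported_mat_def mat_id_def)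

lemma nonneg_col_stochastic_mat_prod:
  "(\<And>r. r \<in> {1..m} \<Longrightarrow> nonneg_col_stochastic N (Xs r)) \<Longrightarrow>
    nonneg_col_stochastic N (mat_prod N Xs m)"
  by (induction m) (auto intro!: nonneg_col_stochastic_mat_mult nonneg_col_stochastic_mat_id)

text \<open>Every positive entry of a product of \<open>m\<close> such matrices is a sum of products of \<open>m\<close>
  positive entries, each at least \<open>c\<close>.\<close>
lemma mat_prod_entry_zero_or_ge:
  assumes c: "0 < c" "c \<le> 1"
    and X: "\<And>r. r \<in> {1..m} \<Longrightarrow> nonneg_col_stochastic N (Xs r)"
    and X_entries: "\<And>r l i. r \<in> {1..m} \<Longrightarrow> Xs r l i = 0 \<or> c \<le> Xs r l i"
  shows "mat_prod N Xs m l i = 0 \<or> c ^ m \<le> mat_prod N Xs m l i"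
  using X X_entries
proof (induction m arbitrary: l i)
  case 0
  then show ?case by (simp add: mat_id_def)
next
  case (Suc m)
  let ?X = "Xs (Suc m)" and ?P = "mat_prod N Xs m"
  have IH: "?P p i = 0 \<or> c ^ m \<le> ?P p i" for p
    using Suc by auto
  have X: "nonneg_col_stochastic N ?X" and P: "nonneg_col_stochastic N ?P"
    using Suc.prems by (auto intro!: nonneg_col_stochastic_mat_prod)
  show ?case
  proof (cases "mat_prod N Xs (Suc m) l i = 0")
    case False
    then have li: "l < N" "i < N" and "(\<Sum>p<N. ?X l p * ?P p i) \<noteq> 0"
      by (auto simp: mat_mult_def split: if_splits)
    then obtain p where p: "p < N" "?X l p * ?P p i \<noteq> 0"
      by (meson sum.neutral lessThan_iff)
    have "c ^ Suc m \<le> ?X l p * ?P p i"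
      using Suc.prems(2)[of "Suc m" l p] IH[of p] p(2) c
      by (auto simp: mult_mono mult.commute)
    also have "\<dots> \<le> (\<Sum>p<N. ?X l p * ?P p i)"
      using p(1) by (intro member_le_sum)
        (auto simp: nonneg_col_stochastic_nonneg[OF X] nonneg_col_stochastic_nonneg[OF P])
    finally show ?thesis using li by (simp add: mat_mult_def)
  qed simp
qed

lemma supported_vec_vec_iter: "supported_vec N v \<Longrightarrow> supported_vec N (vec_iter N B v k)"
  by (cases k) (simp_all add: supported_vec_mat_vec)

lemma vec_sum_vec_iter:
  "(\<And>k. nonneg_col_stochastic N (B k)) \<Longrightarrow> vec_sum N (vec_iter N B v k) = vec_sum N v"
  by (induction k) (simp_all add: vec_sum_mat_vec)

lemma vec_iter_nonneg:
  "(\<And>k. nonneg_col_stochastic N (B k)) \<Longrightarrow> (\<And>i. 0 \<le> v i) \<Longrightarrow> 0 \<le> vec_iter N B v k l"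
  by (induction k arbitrary: l) (simp_all add: mat_vec_nonneg)

lemma vec_iter_block:
  assumes "supported_vec N v" and "\<forall>r\<in>{1..lam}. B (k + r) = Xs r"
  shows "vec_iter N B v (Suc k + lam) = mat_vec N (mat_prod N Xs lam) (vec_iter N B v (Suc k))"
proof -
  have "vec_iter N B v (Suc k + lam) = vec_iter N (\<lambda>r. B (Suc k + r)) (vec_iter N B v (Suc k)) lam"
    by (rule vec_iter_add)
  also have "\<dots> = vec_iter N (\<lambda>r. Xs (Suc r)) (vec_iter N B v (Suc k)) lam"
  proof (rule vec_iter_cong)
    fix r assume "r < lam"
    then show "B (Suc k + r) = Xs (Suc r)"
      using assms(2) by (metis add_Suc_shift atLeastAtMost_iff le_add1 plus_1_eq_Suc Suc_leI)
  qed
  also have "\<dots> = mat_vec N (mat_prod N Xs lam) (vec_iter N B v (Suc k))"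
    using assms(1) by (intro vec_iter_eq_mat_prod supported_vec_vec_iter)
  finally show ?thesis .
qed

context
  fixes N lam j :: nat and g :: real and B Xs :: "nat \<Rightarrow> rmat"
  assumes B_stoch: "\<And>k. nonneg_col_stochastic N (B k)"
    and Xs_stoch: "\<And>r. r \<in> {1..lam} \<Longrightarrow> nonneg_col_stochastic N (Xs r)"
    and j: "j < N"
    and row: "\<forall>i<N. g \<le> mat_prod N Xs lam j i"
    and blocks: "\<exists>\<^sub>\<infinity>k. \<forall>r\<in>{1..lam}. B (k + r) = Xs r"
begin

lemma frequently_vec_iter_row_ge:
  assumes y: "supported_vec N y" "\<And>i. 0 \<le> y i"
  shows "\<exists>\<^sub>\<infinity>k. g * vec_sum N y \<le> vec_iter N B y k j"
  using blocks
proof (rule INFM_nat_shift[where d = "Suc lam"])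
  fix k assume "\<forall>r\<in>{1..lam}. B (k + r) = Xs r"
  from vec_iter_block[OF y(1) this]
  have "vec_iter N B y (k + Suc lam) j = mat_vec N (mat_prod N Xs lam) (vec_iter N B y (Suc k)) j"
    by (simp only: add_Suc_shift)
  also have "\<dots> = (\<Sum>i<N. mat_prod N Xs lam j i * vec_iter N B y (Suc k) i)"
    using j by (simp add: mat_vec_def)
  also have "\<dots> \<ge> (\<Sum>i<N. g * vec_iter N B y (Suc k) i)"
    using row vec_iter_nonneg[of N B y, OF B_stoch y(2)]
    by (intro sum_mono mult_right_mono) (auto simp del: vec_iter.simps)
  moreover have "(\<Sum>i<N. g * vec_iter N B y (Suc k) i) = g * vec_sum N y"
    using vec_sum_vec_iter[of N B, OF B_stoch]
    by (simp add: vec_sum_def del: vec_iter.simps flip: sum_distrib_left)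
  ultimately show "g * vec_sum N y \<le> vec_iter N B y (k + Suc lam) j" by simp
qed

lemma vec_norm1_vec_iter_tendsto_0:
  assumes g: "0 < g" "g \<le> 1" and w: "supported_vec N w" "vec_sum N w = 0"
  shows "(\<lambda>k. vec_norm1 N (vec_iter N B w k)) \<longlonglongrightarrow> 0"
proof (rule decseq_frequently_contracting_tendsto_0)
  show "decseq (\<lambda>k. vec_norm1 N (vec_iter N B w k))"
    by (rule decseq_SucI) (simp add: vec_norm1_mat_vec_le[OF B_stoch])
  show "0 \<le> vec_norm1 N (vec_iter N B w k)" for k
    by (simp add: vec_norm1_def sum_nonneg)
  show "\<exists>\<^sub>\<infinity>k. \<exists>k'. vec_norm1 N (vec_iter N B w k') \<le> (1 - g) * vec_norm1 N (vec_iter N B w k)"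
    using blocks
  proof (rule INFM_nat_shift[where d = 1])
    fix k assume "\<forall>r\<in>{1..lam}. B (k + r) = Xs r"
    from vec_iter_block[OF w(1) this]
    have "vec_norm1 N (vec_iter N B w (Suc k + lam)) =
        vec_norm1 N (mat_vec N (mat_prod N Xs lam) (vec_iter N B w (Suc k)))"
      by (simp only:)
    also have "\<dots> \<le> (1 - g) * vec_norm1 N (vec_iter N B w (Suc k))"
      using Xs_stoch j row w(2) vec_sum_vec_iter[of N B, OF B_stoch]
      by (intro vec_norm1_mat_vec_contract nonneg_col_stochastic_mat_prod)
        (auto simp del: vec_iter.simps)
    finally show "\<exists>k'. vec_norm1 N (vec_iter N B w k')
        \<le> (1 - g) * vec_norm1 N (vec_iter N B w (k + 1))"
      by (metis Suc_eq_plus1)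
  qed
qed (use g in auto)

text \<open>\<open>x - a y\<close> with \<open>a = \<Sum>x / \<Sum>y\<close> has mass zero, so it
  vanishes in the limit, and dividing by \<open>y\<^sub>j \<ge> h\<close> transfers this to \<open>x\<^sub>j / y\<^sub>j - a\<close>.\<close>
lemma vec_iter_ratio_tendsto:
  assumes g: "0 < g" "g \<le> 1"
    and x: "supported_vec N x" and y: "supported_vec N y" "\<And>i. 0 \<le> y i"
    and h: "0 < h" "h \<le> g * vec_sum N y"
  defines "K \<equiv> {k. h \<le> vec_iter N B y k j}"
  shows "infinite K"
    and "((\<lambda>k. vec_iter N B x k j / vec_iter N B y k j) \<longlongrightarrow> vec_sum N x / vec_sum N y)
          (inf sequentially (principal K))"
proof -
  show "infinite K"
    using frequently_vec_iter_row_ge[OF y] h(2) unfolding K_def Inf_many_def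
    by (auto elim!: infinite_super[rotated])
next
  define a where "a = vec_sum N x / vec_sum N y"
  define w where "w l = x l - a * y l" for l
  have "vec_sum N y > 0"
    using zero_less_mult_pos[of g "vec_sum N y"] g h by linarith
  then have "vec_sum N w = 0"
    unfolding w_def vec_sum_def sum_subtractf sum_distrib_left[symmetric]
    by (simp add: a_def vec_sum_def)
  moreover have "supported_vec N w"
    using x y by (simp add: supported_vec_def w_def)
  ultimately have w: "supported_vec N w" "vec_sum N w = 0" by auto
  have w_iter: "vec_iter N B w k j = vec_iter N B x k j - a * vec_iter N B y k j" for k
    unfolding w_def vec_iter_diff ..
  show "((\<lambda>k. vec_iter N B x k j / vec_iter N B y k j) \<longlongrightarrow> a) (inf sequentially (principal K))"
  proof (rule tendstoI)
    fix e :: real assume "e > 0"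
    then have "\<forall>\<^sub>F k in sequentially. vec_norm1 N (vec_iter N B w k) < e * h"
      using h(1) by (intro order_tendstoD(2)[OF vec_norm1_vec_iter_tendsto_0[OF g w]]) simp
    then show "\<forall>\<^sub>F k in inf sequentially (principal K).
        dist (vec_iter N B x k j / vec_iter N B y k j) a < e"
      unfolding eventually_inf_principal
    proof (rule eventually_mono, intro impI)
      fix k assume small: "vec_norm1 N (vec_iter N B w k) < e * h" and "k \<in> K"
      then have yk: "h \<le> vec_iter N B y k j" by (simp add: K_def)
      have "\<bar>vec_iter N B w k j\<bar> \<le> vec_norm1 N (vec_iter N B w k)"
        unfolding vec_norm1_def using j by (intro member_le_sum) auto
      also have "\<dots> < e * vec_iter N B y k j"
        using small mult_left_mono[OF yk, of e] \<open>e > 0\<close> by linarith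
      finally show "dist (vec_iter N B x k j / vec_iter N B y k j) a < e"
        using yk h(1) by (simp add: w_iter dist_real_def abs_less_iff field_simps)
    qed
  qed
qed

lemma vec_sum_prefix:
  "n \<le> N \<Longrightarrow> vec_sum N (\<lambda>l. if l < N then if l < n then f l else 0 else 0) = (\<Sum>i<n. f i)"
proof -
  assume "n \<le> N"
  then have "{l\<in>{..<N}. l < n} = {..<n}" by auto
  then show ?thesis
    unfolding vec_sum_def by (simp add: sum.inter_filter[symmetric])
qed

lemma vec_iter_prefix_ratio_tendsto:
  fixes x0 :: "nat \<Rightarrow> real"
  assumes g: "0 < g" "g \<le> 1" and n: "1 \<le> n" "n \<le> N"
  defines "x \<equiv> \<lambda>l. if l < N then if l < n then x0 l else 0 else 0"
    and "y \<equiv> \<lambda>l. if l < N then if l < n then 1 else 0 else 0"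
  shows "infinite {k. g \<le> vec_iter N B y k j} \<and>
    ((\<lambda>k. vec_iter N B x k j / vec_iter N B y k j) \<longlongrightarrow> (\<Sum>i<n. x0 i) / real n)
      (inf sequentially (principal {k. g \<le> vec_iter N B y k j}))"
proof -
  have "vec_sum N x = (\<Sum>i<n. x0 i)" and "vec_sum N y = real n"
    unfolding x_def y_def using vec_sum_prefix[OF n(2)] by simp_all
  moreover have "g \<le> g * real n" using g n by simp
  ultimately show ?thesis
    using vec_iter_ratio_tendsto[of x y g] g by (simp add: x_def y_def supported_vec_def)
qed

end

section \<open>Recurrence of the block (A2) under (A3)\<close>

context prob_space
begin

context
  fixes Xi :: "nat \<Rightarrow> 'a \<Rightarrow> rmat" and XX :: "rmat set"
    and lam :: nat and Xs :: "nat \<Rightarrow> rmat" and pmin :: real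
  assumes XX_fin: "finite XX"
    and Xi_vals: "\<forall>k. \<forall>\<omega>\<in>space M. Xi k \<omega> \<in> XX"
    and Xi_meas: "\<forall>k A. {\<omega>\<in>space M. Xi k \<omega> = A} \<in> sets M"
    and A3: "\<forall>k (Ps :: nat \<Rightarrow> rmat).
       measure M {\<omega>\<in>space M. (\<forall>i\<le>k. Xi i \<omega> = Ps i) \<and> (\<forall>r\<in>{1..lam}. Xi (k + r) \<omega> = Xs r)}
         \<ge> pmin * measure M {\<omega>\<in>space M. \<forall>i\<le>k. Xi i \<omega> = Ps i}"
begin

abbreviation block_at :: "nat \<Rightarrow> 'a \<Rightarrow> bool" where
  "block_at k \<omega> \<equiv> \<forall>r\<in>{1..lam}. Xi (k + r) \<omega> = Xs r"

lemma events_Xi_eq_on_finite: "finite I \<Longrightarrow> {\<omega>\<in>space M. \<forall>r\<in>I. Xi (f r) \<omega> = Ps r} \<in> events"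
  using Xi_meas by (intro sets.sets_Collect_finite_All) auto

text \<open>(A3) conditions on a single past history; summing over the finitely many histories of
  length \<open>k + 1\<close> extends it to every event determined by \<open>Xi 0, \<dots>, Xi k\<close>.\<close>
lemma prob_past_event_and_block_ge:
  assumes past: "\<And>P Q. (\<forall>i\<le>k. P i = Q i) \<Longrightarrow> G P = G Q"
  shows "pmin * prob {\<omega>\<in>space M. G (\<lambda>i. Xi i \<omega>)}
    \<le> prob {\<omega>\<in>space M. G (\<lambda>i. Xi i \<omega>) \<and> block_at k \<omega>}"
proof -
  define H where "H = {Ps \<in> Pi\<^sub>E {..k} (\<lambda>_. XX). G Ps}"
  define C where "C D Ps = {\<omega>\<in>space M. (\<forall>i\<le>k. Xi i \<omega> = Ps i) \<and> D \<omega>}" for D Ps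
  have "finite (Pi\<^sub>E {..k} (\<lambda>_. XX))"
    using XX_fin by (simp add: finite_PiE)
  then have H_fin: "finite H"
    unfolding H_def by (rule rev_finite_subset) auto
  have decompose: "prob {\<omega>\<in>space M. G (\<lambda>i. Xi i \<omega>) \<and> D \<omega>} = (\<Sum>Ps\<in>H. prob (C D Ps))"
    if D: "{\<omega>\<in>space M. D \<omega>} \<in> events" for D
  proof -
    have "{\<omega>\<in>space M. G (\<lambda>i. Xi i \<omega>) \<and> D \<omega>} = (\<Union>Ps\<in>H. C D Ps)"
    proof (intro equalityI subsetI)
      fix \<omega> assume \<omega>: "\<omega> \<in> {\<omega>\<in>space M. G (\<lambda>i. Xi i \<omega>) \<and> D \<omega>}"
      let ?Ps = "restrict (\<lambda>i. Xi i \<omega>) {..k}"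
      have "\<forall>i\<in>{..k}. Xi i \<omega> \<in> XX"
        using \<omega> Xi_vals by blast
      then have "?Ps \<in> Pi\<^sub>E {..k} (\<lambda>_. XX)"
        by (simp only: restrict_PiE_iff)
      moreover have "G ?Ps"
        using \<omega> past[of ?Ps "\<lambda>i. Xi i \<omega>"] by simp
      ultimately have "?Ps \<in> H" by (simp add: H_def)
      moreover have "\<omega> \<in> C D ?Ps" using \<omega> by (simp add: C_def)
      ultimately show "\<omega> \<in> (\<Union>Ps\<in>H. C D Ps)" by blast
    next
      fix \<omega> assume "\<omega> \<in> (\<Union>Ps\<in>H. C D Ps)"
      then obtain Ps where "Ps \<in> H" "\<omega> \<in> C D Ps" by blast
      then show "\<omega> \<in> {\<omega>\<in>space M. G (\<lambda>i. Xi i \<omega>) \<and> D \<omega>}"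
        using past[of Ps "\<lambda>i. Xi i \<omega>"] by (simp add: H_def C_def)
    qed
    moreover have "disjoint_family_on (C D) H"
      unfolding disjoint_family_on_def
    proof (intro ballI impI)
      fix P Q assume "P \<in> H" "Q \<in> H" "P \<noteq> Q"
      then obtain i where "i \<le> k" "P i \<noteq> Q i"
        unfolding H_def using PiE_ext[of P "{..k}" "\<lambda>_. XX" Q] by auto
      then show "C D P \<inter> C D Q = {}" by (auto simp: C_def)
    qed
    moreover have "C D Ps \<in> events" for Ps
    proof -
      have "C D Ps = {\<omega>\<in>space M. \<forall>i\<in>{..k}. Xi (id i) \<omega> = Ps i} \<inter> {\<omega>\<in>space M. D \<omega>}"
        by (auto simp: C_def)
      then show ?thesis
        using events_Xi_eq_on_finite[of "{..k}" id Ps] D by simp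
    qed
    ultimately show ?thesis
      using H_fin by (simp add: measure_finite_Union image_subset_iff)
  qed
  have "pmin * prob {\<omega>\<in>space M. G (\<lambda>i. Xi i \<omega>)} = (\<Sum>Ps\<in>H. pmin * prob (C (\<lambda>_. True) Ps))"
    using decompose[of "\<lambda>_. True"] by (simp add: sum_distrib_left)
  also have "\<dots> \<le> (\<Sum>Ps\<in>H. prob (C (\<lambda>\<omega>. block_at k \<omega>) Ps))"
    using A3 by (intro sum_mono) (simp add: C_def)
  also have "\<dots> = prob {\<omega>\<in>space M. G (\<lambda>i. Xi i \<omega>) \<and> block_at k \<omega>}"
    using decompose events_Xi_eq_on_finite[of "{1..lam}" "\<lambda>r. k + r" Xs] by simp
  finally show ?thesis .
qed

lemma events_block: "{\<omega>\<in>space M. block_at k \<omega>} \<in> events"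
  using events_Xi_eq_on_finite[of "{1..lam}" "\<lambda>r. k + r" Xs] by simp

lemma events_no_block_in_windows:
  "{\<omega>\<in>space M. \<forall>t<m. \<not> block_at (k0 + t * lam) \<omega>} \<in> events"
proof -
  have "{\<omega>\<in>space M. \<forall>t\<in>{..<m}. \<not> block_at (k0 + t * lam) \<omega>} \<in> events"
  proof (rule sets.sets_Collect_finite_All)
    show "{\<omega>\<in>space M. \<not> block_at (k0 + t * lam) \<omega>} \<in> events" for t
      by (rule sets.sets_Collect_neg[OF events_block])
  qed simp
  then show ?thesis by (simp only: Ball_def lessThan_iff)
qed

text \<open>Missing the first \<open>m\<close> windows is determined by the past of window \<open>m + 1\<close>, so by (A3)
  each further window is missed with conditional probability at most \<open>1 - pmin\<close>.\<close>
lemma prob_no_block_in_windows_le: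
  "prob {\<omega>\<in>space M. \<forall>t<m. \<not> block_at (k0 + t * lam) \<omega>}
    \<le> max 0 (1 - pmin) ^ m"
proof (induction m)
  case (Suc m)
  define G where "G P \<longleftrightarrow> (\<forall>t<m. \<not> (\<forall>r\<in>{1..lam}. P (k0 + t * lam + r) = Xs r))"
    for P :: "nat \<Rightarrow> rmat"
  define F where "F = {\<omega>\<in>space M. G (\<lambda>i. Xi i \<omega>)}"
  define Bl where "Bl = {\<omega>\<in>space M. block_at (k0 + m * lam) \<omega>}"
  have past: "G P = G Q" if "\<forall>i\<le>k0 + m * lam. P i = Q i" for P Q
  proof -
    have "k0 + t * lam + r \<le> k0 + m * lam" if "t < m" "r \<in> {1..lam}" for t r
      using that mult_le_mono1[of "Suc t" m lam] by auto
    then show ?thesis using that unfolding G_def by auto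
  qed
  have F: "F \<in> events"
    unfolding F_def G_def by (rule events_no_block_in_windows)
  have Bl: "Bl \<in> events"
    unfolding Bl_def by (rule events_block)
  have "prob {\<omega>\<in>space M. \<forall>t<Suc m. \<not> block_at (k0 + t * lam) \<omega>}
      = prob (F - Bl)"
    by (rule arg_cong[where f = prob]) (auto simp: F_def G_def Bl_def less_Suc_eq)
  also have "\<dots> = prob F - prob (F \<inter> Bl)"
    using F Bl by (rule finite_measure_Diff')
  also have "\<dots> \<le> (1 - pmin) * prob F"
  proof -
    have "F \<inter> Bl = {\<omega>\<in>space M. G (\<lambda>i. Xi i \<omega>) \<and> block_at (k0 + m * lam) \<omega>}"
      by (auto simp: F_def Bl_def)
    then show ?thesis
      using prob_past_event_and_block_ge[of "k0 + m * lam" G, OF past]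
      unfolding F_def by (simp add: algebra_simps)
  qed
  also have "\<dots> \<le> max 0 (1 - pmin) * max 0 (1 - pmin) ^ m"
    using Suc by (intro mult_mono) (auto simp: F_def G_def)
  finally show ?case by simp
qed simp

lemma AE_frequently_block:
  assumes pmin: "pmin > 0"
  shows "AE \<omega> in M. \<exists>\<^sub>\<infinity>k. block_at k \<omega>"
proof -
  define q where "q = max 0 (1 - pmin)"
  have q: "0 \<le> q" "q < 1" using pmin by (auto simp: q_def)
  have "AE \<omega> in M. \<exists>k\<ge>k0. block_at k \<omega>" for k0
  proof -
    define F where "F m = {\<omega>\<in>space M. \<forall>t<m. \<not> block_at (k0 + t * lam) \<omega>}"
      for m
    have F: "F m \<in> events" for m
      unfolding F_def by (rule events_no_block_in_windows)
    have "prob (\<Inter>m. F m) \<le> 0"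
    proof (rule LIMSEQ_le_const)
      show "(\<lambda>m. q ^ m) \<longlonglongrightarrow> 0" using q by (intro LIMSEQ_power_zero) auto
      have "prob (\<Inter>m. F m) \<le> q ^ m" for m
        using finite_measure_mono[of "\<Inter>m. F m" "F m", OF _ F] prob_no_block_in_windows_le[of m k0]
        unfolding F_def q_def by fastforce
      then show "\<exists>M. \<forall>m\<ge>M. prob (\<Inter>m. F m) \<le> q ^ m" by blast
    qed
    then have "(\<Inter>m. F m) \<in> null_sets M"
      using F by (intro null_setsI) (auto simp: emeasure_eq_measure measure_le_0_iff)
    moreover have "{\<omega>\<in>space M. \<not> (\<exists>k\<ge>k0. block_at k \<omega>)} \<subseteq> (\<Inter>m. F m)"
    proof (intro subsetI INT_I)
      fix \<omega> m assume \<omega>: "\<omega> \<in> {\<omega>\<in>space M. \<not> (\<exists>k\<ge>k0. block_at k \<omega>)}"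
      have "\<not> block_at (k0 + t * lam) \<omega>" for t
        using \<omega> le_add1[of k0 "t * lam"] by simp
      with \<omega> show "\<omega> \<in> F m"
        unfolding F_def by simp
    qed
    ultimately show ?thesis by (rule AE_I')
  qed
  then show ?thesis
    unfolding INFM_nat_le by (subst AE_all_countable) auto
qed

end

end

lemma Min_out_weight:
  fixes E :: "(nat \<times> nat) set"
  assumes "n \<ge> 1"
  defines "c \<equiv> Min ((\<lambda>j. 1 / (1 + real (out_deg E j))) ` {0..<n})"
  shows "0 < c" and "c \<le> 1"
    and "a = 0 \<or> a = 1 \<or> (\<exists>j<n. a = 1 / (1 + real (out_deg E j))) \<Longrightarrow> a = 0 \<or> c \<le> a"
proof -
  have fin: "finite ((\<lambda>j. 1 / (1 + real (out_deg E j))) ` {0..<n})" by simp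
  have "c \<in> (\<lambda>j. 1 / (1 + real (out_deg E j))) ` {0..<n}"
    unfolding c_def using assms(1) by (intro Min_in fin) auto
  then show "0 < c" "c \<le> 1" by auto
  have "c \<le> 1 / (1 + real (out_deg E j))" if "j < n" for j
    unfolding c_def using that by (intro Min_le fin) auto
  then show "a = 0 \<or> c \<le> a" if "a = 0 \<or> a = 1 \<or> (\<exists>j<n. a = 1 / (1 + real (out_deg E j)))"
    using that \<open>c \<le> 1\<close> by auto
qed

text \<open>Strong connectivity enters only through (A2); neither it nor \<open>lam \<ge> 1\<close> nor the exact
  value of \<open>ntil\<close> (beyond \<open>n \<le> ntil\<close>) is used in the proof.\<close>
theorem theorem1:
  fixes M :: "'a measure"
    and n :: nat and E :: "(nat \<times> nat) set" and tau :: nat and ntil :: nat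
    and x0 :: "nat \<Rightarrow> real"
    and Xi :: "nat \<Rightarrow> 'a \<Rightarrow> rmat"
    and XX :: "rmat set"
    and lam :: nat and Xs :: "nat \<Rightarrow> rmat" and pmin :: real and c :: real
  assumes M: "prob_space M"
    and n_pos: "n \<ge> 1"
    and G: "strongly_connected n E"
    and ntil_def: "ntil = card E * (tau + 1) + n"
    and c_def: "c = Min ((\<lambda>j. 1 / (1 + real (out_deg E j))) ` {0..<n})"
    \<comment> \<open>(A1)\<close>
    and XX_fin: "finite XX"
    and XX_stoch: "\<forall>A\<in>XX. nonneg_col_stochastic ntil A"
    and XX_entries: "\<forall>A\<in>XX. \<forall>l i. A l i = 0 \<or> A l i = 1 \<or>
                        (\<exists>j<n. A l i = 1 / (1 + real (out_deg E j)))"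
    and Xi_vals: "\<forall>k. \<forall>\<omega>\<in>space M. Xi k \<omega> \<in> XX"
    and Xi_meas: "\<forall>k A. {\<omega>\<in>space M. Xi k \<omega> = A} \<in> sets M"
    \<comment> \<open>(A2)\<close>
    and lam_pos: "lam \<ge> 1"
    and Xs_in: "\<forall>r\<in>{1..lam}. Xs r \<in> XX"
    and L_pos: "\<forall>j<n. \<forall>i<ntil. mat_prod ntil Xs lam j i > 0"
    and pmin_pos: "pmin > 0"
    \<comment> \<open>(A3): conditional probability given the past realisations, stated elementarily\<close>
    and A3: "\<forall>k (Ps :: nat \<Rightarrow> rmat).
       measure M {\<omega>\<in>space M. (\<forall>i\<le>k. Xi i \<omega> = Ps i) \<and> (\<forall>r\<in>{1..lam}. Xi (k + r) \<omega> = Xs r)}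
         \<ge> pmin * measure M {\<omega>\<in>space M. \<forall>i\<le>k. Xi i \<omega> = Ps i}"
  shows "AE \<omega> in M. \<forall>j<n.
     (let xt = (\<lambda>k. aug_iter ntil Xi (\<lambda>l. if l < n then x0 l else 0) k \<omega>);
          yt = (\<lambda>k. aug_iter ntil Xi (\<lambda>l. if l < n then 1 else 0) k \<omega>);
          K = {k. yt k j \<ge> c ^ lam}
      in infinite K \<and>
         ((\<lambda>k. xt k j / yt k j) \<longlongrightarrow> (\<Sum>i<n. x0 i) / real n) (inf sequentially (principal K)))"
proof -
  interpret prob_space M by (rule M)
  note c = Min_out_weight[OF n_pos, where E = E, folded c_def]
  define g where "g = c ^ lam"
  have g: "0 < g" "g \<le> 1" using c by (auto simp: g_def power_le_one)
  have n_le: "n \<le> ntil" using ntil_def by simp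
  have Xs_stoch: "nonneg_col_stochastic ntil (Xs r)" if "r \<in> {1..lam}" for r
    using that Xs_in XX_stoch by blast
  have Xs_entries: "Xs r l i = 0 \<or> c \<le> Xs r l i" if "r \<in> {1..lam}" for r l i
    using that Xs_in XX_entries c(3) by blast
  have "mat_prod ntil Xs lam j i = 0 \<or> g \<le> mat_prod ntil Xs lam j i" for j i
    unfolding g_def by (rule mat_prod_entry_zero_or_ge[OF c(1,2) Xs_stoch Xs_entries])
  then have row: "\<forall>i<ntil. g \<le> mat_prod ntil Xs lam j i" if "j < n" for j
    using L_pos that by (metis less_irrefl)
  have "AE \<omega> in M. \<exists>\<^sub>\<infinity>k. \<forall>r\<in>{1..lam}. Xi (k + r) \<omega> = Xs r"
    by (rule AE_frequently_block[OF XX_fin Xi_vals Xi_meas A3 pmin_pos])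
  with AE_space show ?thesis
  proof eventually_elim
    case (elim \<omega>)
    then have B_stoch: "nonneg_col_stochastic ntil (Xi k \<omega>)" for k
      using Xi_vals XX_stoch by blast
    show ?case
      unfolding Let_def aug_iter_eq_vec_iter g_def[symmetric]
      using vec_iter_prefix_ratio_tendsto[OF B_stoch Xs_stoch _ row elim(2) g n_pos n_le] n_le
      by auto
  qed
qed

end
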